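(* Let $l\ge2$ be even and let $a,b\in\{1,\dots,l-1\}$ be such that $X=X(\mathbb{Z}_{2l},\{\pm a,\pm b\})$ is a connected $4$-regular circulant graph with $a+b\ne l$. Then $X$ does not admit perfect state transfer between (distinct) vertex type states.
   Context: $X(\mathbb{Z}_n,S)$ (with $S\subseteq\mathbb{Z}_n\setminus\{0\}$, $S=-S$) has vertex set $\mathbb{Z}_n$ and edges $\{x,y\}$ with $y-x\in S$. For a graph with symmetric arc set $\mathcal{A}$ ($t((x,y))=y$, $(x,y)^{-1}=(y,x)$): boundary matrix $d_{x,a}=\frac{1}{\sqrt{\deg x}}\delta_{x,t(a)}$, shift matrix $R_{a,b}=\delta_{a,b^{-1}}$, $U=R(2d^*d-I_{\mathcal{A}})$. Perfect state transfer between vertex type states means $U^\tau d^*e_x=\gamma d^*e_y$ for some distinct vertices $x,y$, some $\tau\in\mathbb{Z}_{\ge1}$ and some $|\gamma|=1$ ($e_x$ the standard unit vector). *)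

theory Defs
  imports Complex_Main
begin

text \<open>Graphs are given by a finite vertex set V and a symmetric arc set A of pairs
 (x,y) (the arc from x to y); t((x,y)) = y and (x,y)^{-1} = (y,x).\<close>

definition mmult :: "'j set \<Rightarrow> ('i \<Rightarrow> 'j \<Rightarrow> complex) \<Rightarrow> ('j \<Rightarrow> 'k \<Rightarrow> complex) \<Rightarrow> 'i \<Rightarrow> 'k \<Rightarrow> complex" where
  "mmult J M N = (\<lambda>i k. \<Sum>j\<in>J. M i j * N j k)"

definition idmat :: "'i \<Rightarrow> 'i \<Rightarrow> complex" where
  "idmat = (\<lambda>i j. if i = j then 1 else 0)"

fun mpow :: "'i set \<Rightarrow> ('i \<Rightarrow> 'i \<Rightarrow> complex) \<Rightarrow> nat \<Rightarrow> 'i \<Rightarrow> 'i \<Rightarrow> complex" where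
  "mpow I M 0 = idmat"
| "mpow I M (Suc n) = mmult I M (mpow I M n)"

definition mvec :: "'j set \<Rightarrow> ('i \<Rightarrow> 'j \<Rightarrow> complex) \<Rightarrow> ('j \<Rightarrow> complex) \<Rightarrow> 'i \<Rightarrow> complex" where
  "mvec J M v = (\<lambda>i. \<Sum>j\<in>J. M i j * v j)"

definition unitvec :: "'v \<Rightarrow> 'v \<Rightarrow> complex" where
  "unitvec x = (\<lambda>y. if y = x then 1 else 0)"

definition conj_transpose :: "('i \<Rightarrow> 'j \<Rightarrow> complex) \<Rightarrow> 'j \<Rightarrow> 'i \<Rightarrow> complex" where
  "conj_transpose M = (\<lambda>j i. cnj (M i j))"

definition gdeg :: "'v set \<Rightarrow> ('v \<times> 'v) set \<Rightarrow> 'v \<Rightarrow> nat" where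
  "gdeg V A x = card {y \<in> V. (x, y) \<in> A}"

definition bdry :: "'v set \<Rightarrow> ('v \<times> 'v) set \<Rightarrow> 'v \<Rightarrow> ('v \<times> 'v) \<Rightarrow> complex" where
  "bdry V A = (\<lambda>x a. if x = snd a then complex_of_real (1 / sqrt (real (gdeg V A x))) else 0)"

definition shiftR :: "('v \<times> 'v) \<Rightarrow> ('v \<times> 'v) \<Rightarrow> complex" where
  "shiftR = (\<lambda>a b. if a = prod.swap b then 1 else 0)"

definition walkU :: "'v set \<Rightarrow> ('v \<times> 'v) set \<Rightarrow> ('v \<times> 'v) \<Rightarrow> ('v \<times> 'v) \<Rightarrow> complex" where
  "walkU V A = mmult A shiftR
     (\<lambda>a b. 2 * mmult V (conj_transpose (bdry V A)) (bdry V A) a b - idmat a b)"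

definition has_vertex_PST :: "'v set \<Rightarrow> ('v \<times> 'v) set \<Rightarrow> bool" where
  "has_vertex_PST V A \<longleftrightarrow>
    (\<exists>x y (\<tau>::nat) (\<gamma>::complex). x \<in> V \<and> y \<in> V \<and> x \<noteq> y \<and> \<tau> \<ge> 1 \<and> cmod \<gamma> = 1 \<and>
      (\<forall>a\<in>A. mvec A (mpow A (walkU V A) \<tau>) (mvec V (conj_transpose (bdry V A)) (unitvec x)) a
             = \<gamma> * mvec V (conj_transpose (bdry V A)) (unitvec y) a))"

text \<open>Circulant graph X(Z_n, S): vertices 0..n-1 (representatives of Z_n),
 arcs (x,y) with (y - x) mod n in S, where S is a set of residues in {0..n-1}.\<close>
definition circ_verts :: "int \<Rightarrow> int set" where
  "circ_verts n = {0..<n}"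

definition circ_arcs :: "int \<Rightarrow> int set \<Rightarrow> (int \<times> int) set" where
  "circ_arcs n S = {(x, y). x \<in> circ_verts n \<and> y \<in> circ_verts n \<and> (y - x) mod n \<in> S}"

definition graph_connected :: "'v set \<Rightarrow> ('v \<times> 'v) set \<Rightarrow> bool" where
  "graph_connected V A \<longleftrightarrow> (\<forall>x\<in>V. \<forall>y\<in>V. (x, y) \<in> A\<^sup>*)"

definition graph_regular :: "'v set \<Rightarrow> ('v \<times> 'v) set \<Rightarrow> nat \<Rightarrow> bool" where
  "graph_regular V A k \<longleftrightarrow> (\<forall>x\<in>V. gdeg V A x = k)"

end

(*
  Let \<zeta> = exp (2 \<pi> i / n). Pairing an arc state with \<zeta>^head and with \<zeta>^tail gives two numbers
  on which the walk acts by a 2 x 2 matrix with trace \<mu>/2, where \<mu> = \<zeta>^a + \<zeta>^-a + \<zeta>^b + \<zeta>^-b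
  is the adjacency eigenvalue of the character v \<mapsto> \<zeta>^v. Starting from the state at x, the head
  pairing after \<tau> steps is therefore \<zeta>^x V_\<tau>(\<mu>/2) with V_\<tau> a monic integer (Vieta-Lucas)
  polynomial. Perfect state transfer forces |V_\<tau>(\<mu>/2)| = 2; as \<mu> is real, V_\<tau>(\<mu>/2) = \<plusminus>2, so
  \<mu>/2 = cos (\<pi> a / l) + cos (\<pi> b / l) is an algebraic integer. But \<zeta>^b \<mu>/2 equals
  (1 + \<zeta>^(b-a)) (1 + \<zeta>^(a+b)) / 2, and counting 2-adic valuations of 1 + (root of unity) shows
  that this is not an algebraic integer when a \<noteq> b and a + b \<noteq> l.
*)
theory Submission
  imports Defs "HOL-Computational_Algebra.Computational_Algebra" "Jordan_Normal_Form.Char_Poly"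
begin

section \<open>The ring of algebraic integers\<close>

definition int_span :: "'a :: comm_ring_1 set \<Rightarrow> 'a set" where
  "int_span G = range (\<lambda>c. \<Sum>g\<in>G. of_int (c g) * g)"

lemma int_span_intro: "u = (\<Sum>g\<in>G. of_int (c g) * g) \<Longrightarrow> u \<in> int_span G"
  unfolding int_span_def by blast

lemma int_span_zero: "0 \<in> int_span G"
  by (rule int_span_intro[where c = "\<lambda>_. 0"]) simp

lemma int_span_add:
  assumes "u \<in> int_span G" "v \<in> int_span G"
  shows "u + v \<in> int_span G"
proof -
  obtain c d where "u = (\<Sum>g\<in>G. of_int (c g) * g)" "v = (\<Sum>g\<in>G. of_int (d g) * g)"
    using assms unfolding int_span_def by auto
  then show ?thesis
    by (intro int_span_intro[where c = "\<lambda>g. c g + d g"]) (simp add: sum.distrib distrib_right)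
qed

lemma int_span_of_int_mult:
  assumes "u \<in> int_span G"
  shows "of_int k * u \<in> int_span G"
proof -
  obtain c where "u = (\<Sum>g\<in>G. of_int (c g) * g)"
    using assms unfolding int_span_def by auto
  then show ?thesis
    by (intro int_span_intro[where c = "\<lambda>g. k * c g"]) (simp add: sum_distrib_left mult.assoc)
qed

lemma int_span_sum: "(\<And>i. i \<in> I \<Longrightarrow> f i \<in> int_span G) \<Longrightarrow> sum f I \<in> int_span G"
  by (induct I rule: infinite_finite_induct) (auto intro: int_span_add int_span_zero)

lemma int_span_generator:
  assumes "finite G" "g \<in> G"
  shows "g \<in> int_span G"
proof (rule int_span_intro)
  have "(\<Sum>h\<in>G. of_int (if h = g then 1 else 0) * h) = (\<Sum>h\<in>G. if h = g then h else 0)"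
    by (rule sum.cong) auto
  then show "g = (\<Sum>h\<in>G. of_int (if h = g then 1 else 0) * h)"
    using assms by simp
qed

lemma int_span_mult_closed:
  assumes "finite G" "\<And>g. g \<in> G \<Longrightarrow> x * g \<in> int_span G" "u \<in> int_span G"
  shows "x * u \<in> int_span G"
proof -
  obtain c where "u = (\<Sum>g\<in>G. of_int (c g) * g)"
    using assms(3) unfolding int_span_def by auto
  then have "x * u = (\<Sum>g\<in>G. of_int (c g) * (x * g))"
    by (simp add: sum_distrib_left mult_ac)
  also have "\<dots> \<in> int_span G"
    using assms(2) by (intro int_span_sum int_span_of_int_mult)
  finally show ?thesis .
qed

lemma algebraic_int_if_int_mat_eigenvalue:
  fixes M :: "int mat" and x :: complex
  assumes M: "M \<in> carrier_mat r r" and "eigenvalue (map_mat of_int M) x"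
  shows "algebraic_int x"
proof -
  have "poly (char_poly (map_mat of_int M)) x = 0"
    using eigenvalue_root_char_poly[of "map_mat of_int M :: complex mat" r] assms by simp
  moreover have "char_poly (map_mat of_int M) = of_int_poly (char_poly M)"
    by (rule of_int_hom.char_poly_hom[OF M])
  moreover have "lead_coeff (char_poly M) = 1"
    using degree_monic_char_poly[OF M] by simp
  ultimately show ?thesis
    using algebraic_int_altdef_ipoly by metis
qed

text \<open>The determinant trick: \<open>x\<close> is an eigenvalue of the integer matrix expressing
  multiplication by \<open>x\<close> on the generators.\<close>

lemma algebraic_int_if_int_span_mult_closed:
  fixes x :: complex
  assumes "finite G" "g\<^sub>0 \<in> G" "g\<^sub>0 \<noteq> 0" and closed: "\<And>g. g \<in> G \<Longrightarrow> x * g \<in> int_span G"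
  shows "algebraic_int x"
proof -
  obtain gs where gs: "set gs = G" "distinct gs"
    using finite_distinct_list[OF assms(1)] by blast
  define r where "r = length gs"
  have bij: "bij_betw ((!) gs) {..<r} G"
    using bij_betw_nth[OF gs(2)] gs(1) r_def by auto
  have "\<forall>i<r. \<exists>c. x * gs ! i = (\<Sum>g\<in>G. of_int (c g) * g)"
  proof (intro allI impI)
    fix i assume "i < r"
    then have "x * gs ! i \<in> int_span G"
      using closed gs(1) nth_mem unfolding r_def by blast
    then show "\<exists>c. x * gs ! i = (\<Sum>g\<in>G. of_int (c g) * g)"
      unfolding int_span_def by blast
  qed
  then obtain C where C: "\<And>i. i < r \<Longrightarrow> x * gs ! i = (\<Sum>g\<in>G. of_int (C i g) * g)"
    by metis
  define M :: "int mat" where "M = mat r r (\<lambda>(i, j). C i (gs ! j))"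
  define v :: "complex vec" where "v = vec r (\<lambda>i. gs ! i)"
  have M: "M \<in> carrier_mat r r"
    unfolding M_def by simp
  have "map_mat of_int M *\<^sub>v v = x \<cdot>\<^sub>v v"
  proof (rule eq_vecI)
    fix i assume "i < dim_vec (x \<cdot>\<^sub>v v)"
    then have i: "i < r"
      unfolding v_def by simp
    have "(map_mat of_int M *\<^sub>v v) $ i = (\<Sum>j<r. of_int (C i (gs ! j)) * gs ! j)"
      using i unfolding M_def v_def mult_mat_vec_def scalar_prod_def
      by (auto simp: lessThan_atLeast0 intro!: sum.cong)
    also have "\<dots> = x * gs ! i"
      using C[OF i] sum.reindex_bij_betw[OF bij, of "\<lambda>g. of_int (C i g) * g"] by simp
    finally show "(map_mat of_int M *\<^sub>v v) $ i = (x \<cdot>\<^sub>v v) $ i"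
      using i unfolding v_def by simp
  qed (simp add: M_def v_def)
  moreover have "v \<noteq> 0\<^sub>v r"
  proof
    obtain j where "j < r" "gs ! j = g\<^sub>0"
      using assms(2) gs(1) unfolding r_def by (metis in_set_conv_nth)
    moreover assume "v = 0\<^sub>v r"
    ultimately show False
      using assms(3) by (metis index_vec index_zero_vec(1) v_def)
  qed
  ultimately have "eigenvalue (map_mat of_int M) x"
    using M unfolding eigenvalue_def eigenvector_def
    by (intro exI[of _ v]) (auto simp: v_def)
  with M show ?thesis
    by (rule algebraic_int_if_int_mat_eigenvalue)
qed

lemma algebraic_int_power_reduction:
  fixes x :: complex
  assumes "algebraic_int x"
  obtains D c where "D > 0" "x ^ D = (\<Sum>i<D. of_int (c i) * x ^ i)"
proof -
  obtain p where p: "poly (of_int_poly p) x = 0" "lead_coeff p = 1"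
    using assms algebraic_int_altdef_ipoly by blast
  have "0 = (\<Sum>i\<le>degree p. of_int (coeff p i) * x ^ i)"
    using p(1) by (simp add: poly_altdef)
  also have "\<dots> = (\<Sum>i<degree p. of_int (coeff p i) * x ^ i) + x ^ degree p"
    using p(2) by (simp add: lessThan_Suc_atMost[symmetric])
  finally have "x ^ degree p = (\<Sum>i<degree p. of_int (- coeff p i) * x ^ i)"
    by (simp add: sum_negf eq_neg_iff_add_eq_0 add.commute)
  moreover have "degree p > 0"
    using p by (intro Nat.gr0I) (simp add: poly_altdef)
  ultimately show ?thesis
    by (intro that)
qed

lemma mult_power_in_int_span:
  assumes reduction: "x ^ D = (\<Sum>i<D. of_int (c i) * x ^ i)"
    and "finite H" and powers: "\<And>j. j < D \<Longrightarrow> x ^ j * h \<in> H" and "i < D"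
  shows "x * (x ^ i * h) \<in> int_span H"
proof (cases "Suc i < D")
  case True
  then show ?thesis
    using powers[of "Suc i"] int_span_generator[OF \<open>finite H\<close>] by (simp add: mult.assoc)
next
  case False
  with \<open>i < D\<close> have "D = Suc i"
    by simp
  then have "x * (x ^ i * h) = x ^ D * h"
    by (simp add: mult.assoc)
  also have "\<dots> = (\<Sum>j<D. of_int (c j) * (x ^ j * h))"
    by (simp add: reduction sum_distrib_right mult.assoc)
  also have "\<dots> \<in> int_span H"
    using powers int_span_generator[OF \<open>finite H\<close>]
    by (intro int_span_sum int_span_of_int_mult) simp
  finally show ?thesis .
qed

lemma algebraic_int_common_span:
  fixes x y :: complex
  assumes "algebraic_int x" "algebraic_int y"
  shows "\<exists>G. finite G \<and> 1 \<in> G \<and> (\<forall>g\<in>G. x * g \<in> int_span G \<and> y * g \<in> int_span G)"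
proof -
  obtain D c where D: "D > 0" "x ^ D = (\<Sum>i<D. of_int (c i) * x ^ i)"
    using algebraic_int_power_reduction[OF assms(1)] .
  obtain E d where E: "E > 0" "y ^ E = (\<Sum>i<E. of_int (d i) * y ^ i)"
    using algebraic_int_power_reduction[OF assms(2)] .
  define G where "G = {x ^ i * y ^ j | i j. i < D \<and> j < E}"
  have G: "x ^ i * y ^ j \<in> G" if "i < D" "j < E" for i j
    unfolding G_def using that by blast
  have "G = (\<lambda>(i, j). x ^ i * y ^ j) ` ({..<D} \<times> {..<E})"
    unfolding G_def by auto
  then have "finite G"
    by simp
  have "x * g \<in> int_span G \<and> y * g \<in> int_span G" if g: "g \<in> G" for g
  proof -
    obtain i j where ij: "i < D" "j < E" "g = x ^ i * y ^ j"
      using g unfolding G_def by blast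
    have "x * (x ^ i * y ^ j) \<in> int_span G"
      using G ij by (intro mult_power_in_int_span[OF D(2) \<open>finite G\<close>])
    moreover have "y * (y ^ j * x ^ i) \<in> int_span G"
      using G ij by (intro mult_power_in_int_span[OF E(2) \<open>finite G\<close>]) (simp_all add: mult.commute)
    ultimately show ?thesis
      using ij by (simp add: mult.commute)
  qed
  moreover have "1 \<in> G"
    using G[of 0 0] D E by simp
  ultimately show ?thesis
    using \<open>finite G\<close> by (intro exI[of _ G]) simp
qed

lemma algebraic_int_times [intro]:
  fixes x y :: complex
  assumes "algebraic_int x" "algebraic_int y"
  shows "algebraic_int (x * y)"
proof -
  obtain G where G: "finite G" "1 \<in> G"
    "\<And>g. g \<in> G \<Longrightarrow> x * g \<in> int_span G" "\<And>g. g \<in> G \<Longrightarrow> y * g \<in> int_span G"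
    using algebraic_int_common_span[OF assms] by blast
  have "x * y * g \<in> int_span G" if "g \<in> G" for g
    using int_span_mult_closed[OF G(1,3) G(4)[OF that]] by (simp add: mult.assoc)
  then show ?thesis
    using algebraic_int_if_int_span_mult_closed[OF G(1,2)] by simp
qed

lemma algebraic_int_plus [intro]:
  fixes x y :: complex
  assumes "algebraic_int x" "algebraic_int y"
  shows "algebraic_int (x + y)"
proof -
  obtain G where G: "finite G" "1 \<in> G"
    "\<And>g. g \<in> G \<Longrightarrow> x * g \<in> int_span G" "\<And>g. g \<in> G \<Longrightarrow> y * g \<in> int_span G"
    using algebraic_int_common_span[OF assms] by blast
  have "(x + y) * g \<in> int_span G" if "g \<in> G" for g
    using int_span_add[OF G(3,4)[OF that]] by (simp add: distrib_right)
  then show ?thesis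
    using algebraic_int_if_int_span_mult_closed[OF G(1,2)] by simp
qed

lemma algebraic_int_diff [intro]:
  "algebraic_int x \<Longrightarrow> algebraic_int y \<Longrightarrow> algebraic_int (x - y :: complex)"
  using algebraic_int_plus[of x "- y"] by auto

lemma algebraic_int_power [intro]: "algebraic_int x \<Longrightarrow> algebraic_int (x ^ n :: complex)"
  by (induct n) auto

lemma algebraic_int_sum [intro]:
  "(\<And>i. i \<in> I \<Longrightarrow> algebraic_int (f i :: complex)) \<Longrightarrow> algebraic_int (sum f I)"
  by (induct I rule: infinite_finite_induct) auto

lemma algebraic_int_prod [intro]:
  "(\<And>i. i \<in> I \<Longrightarrow> algebraic_int (f i :: complex)) \<Longrightarrow> algebraic_int (prod f I)"
  by (induct I rule: infinite_finite_induct) auto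

section \<open>Divisibility by \<open>2\<close> and roots of unity\<close>

definition alg_dvd :: "complex \<Rightarrow> complex \<Rightarrow> bool" where
  "alg_dvd x y \<longleftrightarrow> (\<exists>z. algebraic_int z \<and> y = x * z)"

lemma alg_dvdI: "algebraic_int z \<Longrightarrow> y = x * z \<Longrightarrow> alg_dvd x y"
  unfolding alg_dvd_def by blast

lemma alg_dvdE:
  assumes "alg_dvd x y"
  obtains z where "algebraic_int z" "y = x * z"
  using assms unfolding alg_dvd_def by blast

lemma alg_dvd_trans:
  assumes "alg_dvd x y" "alg_dvd y w"
  shows "alg_dvd x w"
proof -
  obtain z z' where "algebraic_int z" "y = x * z" "algebraic_int z'" "w = y * z'"
    using assms by (auto elim!: alg_dvdE)
  then show ?thesis
    by (intro alg_dvdI[of "z * z'"]) (auto simp: mult.assoc)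
qed

lemma alg_dvd_mult:
  assumes "alg_dvd x y" "alg_dvd u v"
  shows "alg_dvd (x * u) (y * v)"
proof -
  obtain z z' where "algebraic_int z" "y = x * z" "algebraic_int z'" "v = u * z'"
    using assms by (auto elim!: alg_dvdE)
  then show ?thesis
    by (intro alg_dvdI[of "z * z'"]) (auto simp: mult_ac)
qed

lemma alg_dvd_power:
  assumes "alg_dvd x y"
  shows "alg_dvd (x ^ n) (y ^ n)"
proof -
  obtain z where "algebraic_int z" "y = x * z"
    using assms by (rule alg_dvdE)
  then show ?thesis
    by (intro alg_dvdI[of "z ^ n"]) (auto simp: power_mult_distrib)
qed

lemma int_dvd_if_alg_dvd:
  assumes "alg_dvd (of_int a) (of_int b)" "a \<noteq> 0"
  shows "a dvd b"
proof -
  obtain z :: complex where z: "algebraic_int z" "of_int b = of_int a * z"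
    using assms(1) by (rule alg_dvdE)
  then have "z = of_rat (of_int b / of_int a)"
    using assms(2) by (simp add: of_rat_divide)
  then have "z \<in> \<int>"
    using z(1) rational_algebraic_int_is_int Rats_of_rat by metis
  then obtain k where "z = of_int k"
    by (auto elim: Ints_cases)
  then have "b = a * k"
    using z(2) by (metis of_int_eq_iff of_int_mult)
  then show ?thesis ..
qed

lemma algebraic_int_root_of_unity:
  fixes \<theta> :: complex
  assumes "\<theta> ^ N = 1" "N > 0"
  shows "algebraic_int \<theta>"
  by (rule algebraic_int_root[where y = 1 and p = "monom 1 N"])
    (use assms in \<open>auto simp: poly_monom degree_monom_eq coeff_monom\<close>)

lemma alg_dvd_one_minus_root_of_unity:
  fixes \<rho> :: complex
  assumes "\<rho> ^ m = 1" "\<rho> \<noteq> 1"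
  shows "alg_dvd (1 - \<rho>) (of_nat m)"
proof (cases "m = 0")
  case True
  then show ?thesis
    by (intro alg_dvdI[of 0]) simp_all
next
  case False
  have "(1 - \<rho>) * (\<Sum>j<m. \<rho> ^ j) = 0"
    using assms(1) by (simp add: one_diff_power_eq[symmetric])
  then have "(\<Sum>j<m. \<rho> ^ j) = 0"
    using assms(2) by simp
  then have "of_nat m = (\<Sum>j<m. 1 - \<rho> ^ j)"
    by (simp add: sum_subtractf)
  also have "\<dots> = (1 - \<rho>) * (\<Sum>j<m. \<Sum>i<j. \<rho> ^ i)"
    by (simp add: sum_distrib_left one_diff_power_eq)
  finally have eq: "of_nat m = (1 - \<rho>) * (\<Sum>j<m. \<Sum>i<j. \<rho> ^ i)" .
  have "algebraic_int \<rho>"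
    using algebraic_int_root_of_unity[OF assms(1)] False by simp
  then show ?thesis
    by (intro alg_dvdI[OF _ eq]) auto
qed

lemma alg_dvd_one_plus_one_minus_even_power:
  fixes \<theta> :: complex
  assumes "algebraic_int \<theta>"
  shows "alg_dvd (1 + \<theta>) (1 - \<theta> ^ (2 * M))"
proof (rule alg_dvdI)
  have "1 - \<theta> ^ (2 * M) = (1 - \<theta> ^ 2) * (\<Sum>i<M. (\<theta> ^ 2) ^ i)"
    by (simp add: power_mult one_diff_power_eq)
  then show "1 - \<theta> ^ (2 * M) = (1 + \<theta>) * ((1 - \<theta>) * (\<Sum>i<M. (\<theta> ^ 2) ^ i))"
    by (simp add: power2_eq_square algebra_simps)
qed (use assms in auto)

lemma prod_one_minus_odd_powers:
  fixes \<eta> :: complex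
  assumes "\<eta> ^ 2 ^ u = -1"
  shows "(\<Prod>i<2 ^ u. 1 - \<eta> ^ (2 * i + 1)) = 2"
  using assms
proof (induct u arbitrary: \<eta>)
  case 0
  then show ?case by simp
next
  case (Suc u)
  let ?K = "2 ^ u :: nat"
  have split: "(\<Prod>i<2 * ?K. f i) = (\<Prod>i<?K. f i * f (i + ?K))" for f :: "nat \<Rightarrow> complex"
  proof -
    have "(\<Prod>i<2 * ?K. f i) = prod f {..<?K} * prod f {?K..<2 * ?K}"
      by (simp add: prod.atLeastLessThan_concat lessThan_atLeast0)
    also have "prod f {?K..<2 * ?K} = (\<Prod>i<?K. f (i + ?K))"
      using prod.shift_bounds_nat_ivl[of f 0 ?K ?K] by (simp add: mult_2 lessThan_atLeast0)
    finally show ?thesis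
      by (simp add: prod.distrib)
  qed
  have "\<eta> ^ (2 * (i + ?K) + 1) = -(\<eta> ^ (2 * i + 1))" for i
    using Suc.prems by (simp add: power_add power_mult[symmetric] mult.commute)
  then have "(\<Prod>i<2 ^ Suc u. 1 - \<eta> ^ (2 * i + 1)) = (\<Prod>i<?K. 1 - (\<eta> ^ 2) ^ (2 * i + 1))"
    by (simp add: split algebra_simps power_mult[symmetric] flip: power_add)
  also have "\<dots> = 2"
    using Suc.prems by (intro Suc.hyps) (simp add: power_mult[symmetric] mult.commute)
  finally show ?case .
qed

lemma alg_dvd_two_if_power_eq_minus_one:
  fixes \<theta> :: complex
  assumes "algebraic_int \<theta>" "\<theta> ^ 2 ^ u = -1" "u \<ge> 1"
  shows "alg_dvd ((1 + \<theta>) ^ 2 ^ u) 2"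
proof -
  have "(- \<theta>) ^ 2 ^ u = -1"
    using assms(2,3) by simp
  then have "2 = (\<Prod>i<2 ^ u. 1 - (- \<theta>) ^ (2 * i + 1))"
    by (rule prod_one_minus_odd_powers[symmetric])
  also have "\<dots> = (\<Prod>i<2 ^ u. (1 + \<theta>) * (\<Sum>j<2 * i + 1. (- \<theta>) ^ j))"
    using one_diff_power_eq[of "- \<theta>"] by (simp only: diff_minus_eq_add)
  also have "\<dots> = (1 + \<theta>) ^ 2 ^ u * (\<Prod>i<2 ^ u. \<Sum>j<2 * i + 1. (- \<theta>) ^ j)"
    by (simp add: prod.distrib)
  finally have "2 = (1 + \<theta>) ^ 2 ^ u * (\<Prod>i<2 ^ u. \<Sum>j<2 * i + 1. (- \<theta>) ^ j)" .
  moreover have "algebraic_int (\<Prod>i<2 ^ u. \<Sum>j<2 * i + 1. (- \<theta>) ^ j)"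
    using assms(1) by (intro algebraic_int_prod algebraic_int_sum algebraic_int_power algebraic_int_minus)
  ultimately show ?thesis
    by (rule alg_dvdI[rotated])
qed

lemma two_power_root_of_unity_cases:
  fixes \<theta> :: complex
  assumes "\<theta> ^ 2 ^ j = 1"
  shows "\<theta> ^ 2 = 1 \<or> (\<exists>u\<ge>1. \<theta> ^ 2 ^ u = -1)"
  using assms
proof (induct j arbitrary: \<theta>)
  case 0
  then show ?case by simp
next
  case (Suc j)
  then have "(\<theta> ^ 2) ^ 2 ^ j = 1"
    by (simp add: power_mult)
  then have "(\<theta> ^ 2) ^ 2 = 1 \<or> (\<exists>u\<ge>1. (\<theta> ^ 2) ^ 2 ^ u = -1)"
    by (rule Suc.hyps)
  then show ?case
  proof
    assume "(\<theta> ^ 2) ^ 2 = 1"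
    then have "\<theta> ^ 2 = 1 \<or> \<theta> ^ 2 = -1"
      by (simp only: power2_eq_1_iff)
    then show ?case
      by (metis le_refl power_one_right)
  next
    assume "\<exists>u\<ge>1. (\<theta> ^ 2) ^ 2 ^ u = -1"
    then obtain u where "(\<theta> ^ 2) ^ 2 ^ u = -1"
      by blast
    then have "\<theta> ^ 2 ^ Suc u = -1"
      by (simp add: power_mult[symmetric])
    then show ?case
      by (intro disjI2 exI[of _ "Suc u"]) simp
  qed
qed

lemma root_of_unity_cases [consumes 3, case_names odd two_power]:
  fixes \<theta> :: complex
  assumes "\<theta> ^ N = 1" "N > 0" "\<theta> ^ 2 \<noteq> 1"
  obtains (odd) d where "odd d" "alg_dvd (1 + \<theta>) (of_int d)"
    | (two_power) u where "u \<ge> 1" "\<theta> ^ 2 ^ u = -1"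
proof -
  define k where "k = multiplicity 2 N"
  have "N \<noteq> 0" "\<not> is_unit (2::nat)"
    using assms(2) by simp_all
  then obtain d where N: "N = 2 ^ k * d" "odd d"
    unfolding k_def by (rule multiplicity_decompose')
  show ?thesis
  proof (cases "\<theta> ^ 2 ^ Suc k = 1")
    case True
    then show ?thesis
      using two_power_root_of_unity_cases assms(3) that(2) by blast
  next
    case False
    have "(\<theta> ^ 2 ^ Suc k) ^ d = (\<theta> ^ N) ^ 2"
      unfolding N(1) by (simp flip: power_mult add: mult_ac)
    then have "alg_dvd (1 - \<theta> ^ (2 * 2 ^ k)) (of_nat d)"
      using alg_dvd_one_minus_root_of_unity False assms(1) by simp
    moreover have "alg_dvd (1 + \<theta>) (1 - \<theta> ^ (2 * 2 ^ k))"
      using algebraic_int_root_of_unity[OF assms(1,2)] by (rule alg_dvd_one_plus_one_minus_even_power)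
    ultimately have "alg_dvd (1 + \<theta>) (of_int (int d))"
      using alg_dvd_trans by simp
    with N(2) show ?thesis
      by (intro that(1)[of "int d"]) simp_all
  qed
qed

lemma not_alg_dvd_two_power:
  assumes "odd d" "e < N"
  shows "\<not> alg_dvd (2 ^ N) (of_int d * 2 ^ e)"
proof
  assume "alg_dvd (2 ^ N) (of_int d * 2 ^ e)"
  then have "(2::int) ^ (N - e) * 2 ^ e dvd d * 2 ^ e"
    using int_dvd_if_alg_dvd[of "2 ^ N" "d * 2 ^ e"] assms(2) by (simp flip: power_add)
  then have "(2::int) ^ (N - e) dvd d"
    by simp
  moreover have "(2::int) dvd 2 ^ (N - e)"
    using assms(2) by simp
  ultimately show False
    using assms(1) dvd_trans by blast
qed

lemma not_alg_dvd_two_if_odd_odd: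
  assumes "alg_dvd x (of_int d)" "alg_dvd y (of_int d')" "odd d" "odd d'"
  shows "\<not> alg_dvd 2 (x * y)"
proof
  assume "alg_dvd 2 (x * y)"
  then have "alg_dvd 2 (of_int (d * d'))"
    using alg_dvd_trans alg_dvd_mult[OF assms(1,2)] by simp
  then show False
    using not_alg_dvd_two_power[of "d * d'" 0 1] assms(3,4) by simp
qed

lemma not_alg_dvd_two_if_odd_two_power:
  assumes "alg_dvd x (of_int d)" "odd d" "alg_dvd (y ^ 2 ^ u) 2" "u \<ge> 1"
  shows "\<not> alg_dvd 2 (x * y)"
proof
  let ?N = "2 ^ u :: nat"
  assume "alg_dvd 2 (x * y)"
  then have "alg_dvd (2 ^ ?N) ((x * y) ^ ?N)"
    by (rule alg_dvd_power)
  moreover have "alg_dvd ((x * y) ^ ?N) (of_int (d ^ ?N) * 2 ^ 1)"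
    using alg_dvd_mult[OF alg_dvd_power[OF assms(1)] assms(3)] by (simp add: power_mult_distrib)
  ultimately have "alg_dvd (2 ^ ?N) (of_int (d ^ ?N) * 2 ^ 1)"
    by (rule alg_dvd_trans)
  moreover have "1 < ?N"
    using assms(4) by (intro one_less_power) simp_all
  ultimately show False
    using not_alg_dvd_two_power[of "d ^ ?N" 1 ?N] assms(2) by simp
qed

lemma not_alg_dvd_two_if_two_power_two_power:
  assumes "alg_dvd (x ^ 2 ^ u) 2" "alg_dvd (y ^ 2 ^ v) 2" "2 ^ u + 2 ^ v < (2::nat) ^ (u + v)"
  shows "\<not> alg_dvd 2 (x * y)"
proof
  let ?N = "2 ^ (u + v) :: nat"
  assume "alg_dvd 2 (x * y)"
  then have "alg_dvd (2 ^ ?N) (x ^ ?N * y ^ ?N)"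
    unfolding power_mult_distrib[symmetric] by (rule alg_dvd_power)
  moreover have "x ^ ?N = (x ^ 2 ^ u) ^ 2 ^ v" "y ^ ?N = (y ^ 2 ^ v) ^ 2 ^ u"
    by (simp_all add: power_add mult.commute flip: power_mult)
  moreover have "alg_dvd ((x ^ 2 ^ u) ^ 2 ^ v * (y ^ 2 ^ v) ^ 2 ^ u) (2 ^ (2 ^ u + 2 ^ v))"
    using alg_dvd_mult[OF alg_dvd_power[OF assms(1), of "2 ^ v"] alg_dvd_power[OF assms(2), of "2 ^ u"]]
    by (simp add: power_add mult.commute)
  ultimately have "alg_dvd (2 ^ ?N) (of_int 1 * 2 ^ (2 ^ u + 2 ^ v))"
    using alg_dvd_trans by simp
  then show False
    using not_alg_dvd_two_power[of 1] assms(3) by simp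
qed

lemma add_less_mult_nat:
  fixes a b :: nat
  assumes "2 \<le> a" "2 \<le> b" "3 \<le> a \<or> 3 \<le> b"
  shows "a + b < a * b"
proof -
  have "2 * a \<le> a * b" "2 * b \<le> a * b"
    using assms(1,2) by simp_all
  moreover have "3 * a \<le> a * b \<or> 3 * b \<le> a * b"
    using assms(3) by auto
  ultimately show ?thesis
    using assms(1,2) by arith
qed

lemma two_power_add_less:
  assumes "u \<ge> 1" "v \<ge> 1" "\<not> (u = 1 \<and> v = 1)"
  shows "2 ^ u + 2 ^ v < (2::nat) ^ (u + v)"
proof -
  have pow_mono: "2 ^ i \<le> (2::nat) ^ j" if "i \<le> j" for i j
    using that by (rule power_increasing) simp
  have "u \<ge> 2 \<or> v \<ge> 2"
    using assms by arith
  then have "3 \<le> (2::nat) ^ u \<or> 3 \<le> (2::nat) ^ v"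
    using pow_mono[of 2 u] pow_mono[of 2 v] by auto
  moreover have "2 \<le> (2::nat) ^ u" "2 \<le> (2::nat) ^ v"
    using pow_mono[of 1 u] pow_mono[of 1 v] assms(1,2) by simp_all
  ultimately show ?thesis
    using add_less_mult_nat by (simp add: power_add)
qed

text \<open>In \<open>2\<close>-adic terms: \<open>1 + \<theta>\<close> is a unit if the order of \<open>\<theta>\<close> is not a power of \<open>2\<close>,
  and has valuation \<open>2\<^sup>-\<^sup>u\<close> if \<open>\<theta>\<close> has order \<open>2\<^sup>u\<^sup>+\<^sup>1\<close>; so \<open>(1 + \<theta>\<^sub>1) (1 + \<theta>\<^sub>2)\<close>
  has valuation below \<open>1\<close> unless both roots have order \<open>4\<close>.\<close>

lemma not_algebraic_int_half_prod_one_plus_roots_of_unity: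
  fixes \<theta>\<^sub>1 \<theta>\<^sub>2 :: complex
  assumes "\<theta>\<^sub>1 ^ N\<^sub>1 = 1" "N\<^sub>1 > 0" "\<theta>\<^sub>2 ^ N\<^sub>2 = 1" "N\<^sub>2 > 0"
    and "\<theta>\<^sub>1 ^ 2 \<noteq> 1" "\<theta>\<^sub>2 ^ 2 \<noteq> 1" "\<not> (\<theta>\<^sub>1 ^ 2 = -1 \<and> \<theta>\<^sub>2 ^ 2 = -1)"
  shows "\<not> algebraic_int ((1 + \<theta>\<^sub>1) * (1 + \<theta>\<^sub>2) / 2)"
proof
  assume "algebraic_int ((1 + \<theta>\<^sub>1) * (1 + \<theta>\<^sub>2) / 2)"
  then have two: "alg_dvd 2 ((1 + \<theta>\<^sub>1) * (1 + \<theta>\<^sub>2))"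
    by (rule alg_dvdI) simp
  then have two': "alg_dvd 2 ((1 + \<theta>\<^sub>2) * (1 + \<theta>\<^sub>1))"
    by (simp add: mult.commute)
  have alg: "algebraic_int \<theta>\<^sub>1" "algebraic_int \<theta>\<^sub>2"
    using assms(1-4) by (simp_all add: algebraic_int_root_of_unity)
  from assms(1,2,5) show False
  proof (cases rule: root_of_unity_cases)
    case (odd d\<^sub>1)
    note d\<^sub>1 = this
    from assms(3,4,6) show False
    proof (cases rule: root_of_unity_cases)
      case (odd d\<^sub>2)
      show False
        using not_alg_dvd_two_if_odd_odd[OF d\<^sub>1(2) odd(2) d\<^sub>1(1) odd(1)] two by contradiction
    next
      case (two_power u)
      show False
        using not_alg_dvd_two_if_odd_two_power[OF d\<^sub>1(2,1)
            alg_dvd_two_if_power_eq_minus_one[OF alg(2) two_power(2,1)] two_power(1)] two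
        by contradiction
    qed
  next
    case (two_power u)
    note u = this
    from assms(3,4,6) show False
    proof (cases rule: root_of_unity_cases)
      case (odd d)
      show False
        using not_alg_dvd_two_if_odd_two_power[OF odd(2,1)
            alg_dvd_two_if_power_eq_minus_one[OF alg(1) u(2,1)] u(1)] two'
        by contradiction
    next
      case (two_power v)
      have "\<not> (u = 1 \<and> v = 1)"
        using u(2) two_power(2) assms(7) by auto
      with u(1) two_power(1) have exponents: "2 ^ u + 2 ^ v < (2::nat) ^ (u + v)"
        by (rule two_power_add_less)
      show False
        using not_alg_dvd_two_if_two_power_two_power[OF
            alg_dvd_two_if_power_eq_minus_one[OF alg(1) u(2,1)]
            alg_dvd_two_if_power_eq_minus_one[OF alg(2) two_power(2,1)] exponents] two
        by contradiction
    qed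
  qed
qed

section \<open>Vieta--Lucas polynomials\<close>

text \<open>\<open>V\<^sub>n (z + z\<^sup>-\<^sup>1) = z\<^sup>n + z\<^sup>-\<^sup>n\<close>, i.e. \<open>V\<^sub>n (2 cos t) = 2 cos (n t)\<close>.\<close>

fun vieta_lucas :: "nat \<Rightarrow> 'a :: comm_ring_1 poly" where
  "vieta_lucas 0 = [:2:]"
| "vieta_lucas (Suc 0) = [:0, 1:]"
| "vieta_lucas (Suc (Suc n)) = pCons 0 (vieta_lucas (Suc n)) - vieta_lucas n"

lemma degree_vieta_lucas_le: "degree (vieta_lucas n) \<le> n"
proof (induct n rule: vieta_lucas.induct)
  case (3 n)
  then have "degree (pCons 0 (vieta_lucas (Suc n)) :: 'a poly) \<le> Suc (Suc n)"
    using degree_pCons_le[of 0 "vieta_lucas (Suc n) :: 'a poly"] by linarith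
  with 3 show ?case
    by (simp add: degree_diff_le)
qed simp_all

lemma degree_lead_coeff_vieta_lucas:
  assumes "n > 0"
  shows "degree (vieta_lucas n :: 'a :: comm_ring_1 poly) = n \<and> lead_coeff (vieta_lucas n :: 'a poly) = 1"
  using assms
proof (induct n rule: vieta_lucas.induct)
  case (3 n)
  let ?p = "pCons 0 (vieta_lucas (Suc n)) :: 'a poly" and ?q = "- vieta_lucas n :: 'a poly"
  have IH: "degree (vieta_lucas (Suc n) :: 'a poly) = Suc n" "lead_coeff (vieta_lucas (Suc n) :: 'a poly) = 1"
    using 3 zero_less_Suc by blast+
  then have nonzero: "vieta_lucas (Suc n) \<noteq> (0 :: 'a poly)"
    by auto
  have p: "degree ?p = Suc (Suc n)" "lead_coeff ?p = 1"
    using lead_coeff_pCons(1)[OF nonzero, of 0] IH nonzero by simp_all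
  moreover have "degree ?q < degree ?p"
    using degree_vieta_lucas_le[of n, where 'a = 'a] p(1) by simp
  moreover have "vieta_lucas (Suc (Suc n)) = ?q + ?p"
    by simp
  ultimately show ?case
    using degree_add_eq_right lead_coeff_add_le by metis
qed simp_all

lemma coeff_vieta_lucas_Ints: "coeff (vieta_lucas n) i \<in> \<int>"
proof (induct n arbitrary: i rule: vieta_lucas.induct)
  case (3 n)
  then show ?case
    by (cases i) (simp_all add: Ints_diff)
qed (simp_all add: coeff_pCons')

lemma poly_vieta_lucas_of_real: "poly (vieta_lucas n) (of_real x) = (of_real (poly (vieta_lucas n) x) :: complex)"
  by (induct n rule: vieta_lucas.induct) simp_all

lemma algebraic_int_if_poly_vieta_lucas_Ints:
  fixes x :: complex
  assumes "n > 0" "poly (vieta_lucas n) x \<in> \<int>"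
  shows "algebraic_int x"
proof (rule algebraic_int_root[OF int_imp_algebraic_int[OF assms(2)] refl])
  show "\<forall>i. coeff (vieta_lucas n) i \<in> \<int>"
    by (simp add: coeff_vieta_lucas_Ints)
  show "lead_coeff (vieta_lucas n :: complex poly) = 1"
    using degree_lead_coeff_vieta_lucas[OF assms(1), where 'a = complex] by (rule conjunct2)
  show "degree (vieta_lucas n :: complex poly) > 0"
    using degree_lead_coeff_vieta_lucas[OF assms(1), where 'a = complex] assms(1) by simp
qed

section \<open>Grover walks on regular graphs\<close>

lemma mvec_mmult: "mvec J (mmult J M N) v = mvec J M (mvec J N v)"
proof
  fix i
  have "mvec J (mmult J M N) v i = (\<Sum>k\<in>J. \<Sum>j\<in>J. M i j * N j k * v k)"
    unfolding mvec_def mmult_def by (simp add: sum_distrib_right)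
  also have "\<dots> = (\<Sum>j\<in>J. \<Sum>k\<in>J. M i j * N j k * v k)"
    by (rule sum.swap)
  also have "\<dots> = mvec J M (mvec J N v) i"
    unfolding mvec_def by (simp add: sum_distrib_left mult.assoc)
  finally show "mvec J (mmult J M N) v i = mvec J M (mvec J N v) i" .
qed

lemma mvec_idmat: "finite J \<Longrightarrow> i \<in> J \<Longrightarrow> mvec J idmat v i = v i"
  unfolding mvec_def idmat_def by (simp add: if_distrib[of "\<lambda>c. c * _"] sum.delta cong: if_cong)

locale regular_graph =
  fixes V :: "'v set" and A :: "('v \<times> 'v) set" and k :: nat
  assumes finite_V: "finite V"
    and arcs_subset: "A \<subseteq> V \<times> V"
    and arcs_sym: "(x, y) \<in> A \<Longrightarrow> (y, x) \<in> A"
    and regular: "graph_regular V A k"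
    and degree_pos: "k > 0"
begin

abbreviation vertex_state :: "'v \<Rightarrow> 'v \<times> 'v \<Rightarrow> complex" where
  "vertex_state x \<equiv> mvec V (conj_transpose (bdry V A)) (unitvec x)"

lemma finite_A: "finite A"
  using finite_subset[OF arcs_subset] finite_V by blast

lemma snd_arc: "a \<in> A \<Longrightarrow> snd a \<in> V"
  using arcs_subset by auto

lemma swap_arc: "a \<in> A \<Longrightarrow> prod.swap a \<in> A"
  using arcs_sym by (cases a) simp

lemma sum_arcs_swap: "(\<Sum>a\<in>A. f (prod.swap a)) = (\<Sum>a\<in>A. f a)"
  by (rule sum.reindex_bij_witness[of _ prod.swap prod.swap]) (auto simp: swap_arc)

lemma sum_arcs_from:
  assumes "x \<in> V"
  shows "(\<Sum>a\<in>A. if fst a = x then f (snd a) else 0) = (\<Sum>y\<in>{y \<in> V. (x, y) \<in> A}. f y)"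
proof -
  have "(\<Sum>a\<in>A. if fst a = x then f (snd a) else 0) = (\<Sum>a\<in>{a \<in> A. fst a = x}. f (snd a))"
    using finite_A by (simp add: sum.inter_filter)
  also have "\<dots> = (\<Sum>y\<in>{y \<in> V. (x, y) \<in> A}. f y)"
    by (rule sum.reindex_bij_witness[of _ "Pair x" snd]) (auto simp: snd_arc)
  finally show ?thesis .
qed

lemma sum_arcs_from_const: "x \<in> V \<Longrightarrow> (\<Sum>a\<in>A. if fst a = x then c else 0) = of_nat k * c"
  using sum_arcs_from[of x "\<lambda>_. c"] regular unfolding graph_regular_def gdeg_def by simp

lemma sum_composable_arcs:
  fixes f \<psi> :: "'v \<times> 'v \<Rightarrow> complex"
  shows "(\<Sum>a\<in>A. f a * (\<Sum>b\<in>A. if snd b = fst a then \<psi> b else 0))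
    = (\<Sum>b\<in>A. \<psi> b * (\<Sum>a\<in>A. if fst a = snd b then f a else 0))"
proof -
  have "(\<Sum>a\<in>A. f a * (\<Sum>b\<in>A. if snd b = fst a then \<psi> b else 0))
      = (\<Sum>a\<in>A. \<Sum>b\<in>A. if snd b = fst a then f a * \<psi> b else 0)"
    by (simp add: sum_distrib_left if_distrib[of "\<lambda>u. f _ * u"] cong: if_cong)
  also have "\<dots> = (\<Sum>b\<in>A. \<Sum>a\<in>A. if snd b = fst a then f a * \<psi> b else 0)"
    by (rule sum.swap)
  also have "\<dots> = (\<Sum>b\<in>A. \<psi> b * (\<Sum>a\<in>A. if fst a = snd b then f a else 0))"
    by (simp add: sum_distrib_left if_distrib[of "\<lambda>u. \<psi> _ * u"] mult.commute eq_commute cong: if_cong)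
  finally show ?thesis .
qed

lemma bdry_eq: "x \<in> V \<Longrightarrow> bdry V A x a = (if x = snd a then of_real (1 / sqrt k) else 0)"
  using regular unfolding bdry_def graph_regular_def by auto

lemma vertex_state_eq:
  assumes "x \<in> V"
  shows "vertex_state x a = (if snd a = x then of_real (1 / sqrt k) else 0)"
proof -
  have "vertex_state x a = (\<Sum>v\<in>V. if v = x then cnj (bdry V A v a) else 0)"
    unfolding mvec_def conj_transpose_def unitvec_def by (rule sum.cong) auto
  also have "\<dots> = cnj (bdry V A x a)"
    using assms finite_V by simp
  finally show ?thesis
    using assms by (auto simp: bdry_eq)
qed

lemma walkU_eq:
  assumes "a \<in> A" "b \<in> A"
  shows "walkU V A a b = (if snd b = fst a then 2 / k else 0) - (if b = prod.swap a then 1 else 0)"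
proof -
  let ?D = "mmult V (conj_transpose (bdry V A)) (bdry V A)"
  have D: "?D c b = (if snd c = snd b then 1 / k else 0)" if "c \<in> A" for c
  proof -
    have "?D c b = (\<Sum>v\<in>V. if v = snd c then (if v = snd b then of_real (1 / sqrt k) ^ 2 else 0) else 0)"
      unfolding mmult_def conj_transpose_def
      by (rule sum.cong) (auto simp: bdry_eq power2_eq_square)
    also have "\<dots> = (if snd c = snd b then 1 / k else 0)"
      using snd_arc[OF that] finite_V degree_pos by (simp add: power_divide flip: of_real_power)
    finally show ?thesis .
  qed
  have "walkU V A a b = (\<Sum>c\<in>A. if c = prod.swap a then 2 * ?D c b - idmat c b else 0)"
    unfolding walkU_def mmult_def shiftR_def by (rule sum.cong) auto
  also have "\<dots> = 2 * ?D (prod.swap a) b - idmat (prod.swap a) b"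
    using swap_arc[OF assms(1)] finite_A by simp
  finally show ?thesis
    using D[OF swap_arc[OF assms(1)]] unfolding idmat_def by (cases a) auto
qed

lemma walkU_apply:
  fixes \<psi> :: "'v \<times> 'v \<Rightarrow> complex"
  assumes "a \<in> A"
  shows "mvec A (walkU V A) \<psi> a
    = 2 / k * (\<Sum>b\<in>A. if snd b = fst a then \<psi> b else 0) - \<psi> (prod.swap a)"
proof -
  have "mvec A (walkU V A) \<psi> a
      = (\<Sum>b\<in>A. 2 / k * (if snd b = fst a then \<psi> b else 0) - (if b = prod.swap a then \<psi> b else 0))"
    unfolding mvec_def by (rule sum.cong) (auto simp: walkU_eq assms left_diff_distrib)
  also have "\<dots> = 2 / k * (\<Sum>b\<in>A. if snd b = fst a then \<psi> b else 0) - \<psi> (prod.swap a)"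
    using swap_arc[OF assms] finite_A by (simp add: sum_subtractf sum_distrib_left)
  finally show ?thesis .
qed

end

locale graph_eigenvector = regular_graph V A k for V :: "'v set" and A k +
  fixes \<chi> :: "'v \<Rightarrow> complex" and \<mu> :: complex
  assumes eigen: "x \<in> V \<Longrightarrow> (\<Sum>y\<in>{y \<in> V. (x, y) \<in> A}. \<chi> y) = \<mu> * \<chi> x"
begin

text \<open>The walk acts on the pair (head pairing, tail pairing) by the matrix
  \<open>((2\<mu>/k, -1), (1, 0))\<close>, whence the Vieta--Lucas polynomials in \<open>2\<mu>/k\<close>.\<close>

definition head_pairing :: "('v \<times> 'v \<Rightarrow> complex) \<Rightarrow> complex" where
  "head_pairing \<psi> = (\<Sum>a\<in>A. \<chi> (snd a) * \<psi> a)"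

definition tail_pairing :: "('v \<times> 'v \<Rightarrow> complex) \<Rightarrow> complex" where
  "tail_pairing \<psi> = (\<Sum>a\<in>A. \<chi> (fst a) * \<psi> a)"

lemma head_pairing_swap: "(\<Sum>a\<in>A. \<chi> (snd a) * \<psi> (prod.swap a)) = tail_pairing \<psi>"
  unfolding tail_pairing_def using sum_arcs_swap[of "\<lambda>a. \<chi> (fst a) * \<psi> a"] by simp

lemma tail_pairing_swap: "(\<Sum>a\<in>A. \<chi> (fst a) * \<psi> (prod.swap a)) = head_pairing \<psi>"
  unfolding head_pairing_def using sum_arcs_swap[of "\<lambda>a. \<chi> (snd a) * \<psi> a"] by simp

lemma head_pairing_walk:
  "head_pairing (mvec A (walkU V A) \<psi>) = 2 * \<mu> / k * head_pairing \<psi> - tail_pairing \<psi>"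
proof -
  have "head_pairing (mvec A (walkU V A) \<psi>)
      = 2 / k * (\<Sum>a\<in>A. \<chi> (snd a) * (\<Sum>b\<in>A. if snd b = fst a then \<psi> b else 0))
        - (\<Sum>a\<in>A. \<chi> (snd a) * \<psi> (prod.swap a))"
    unfolding head_pairing_def
    by (simp add: walkU_apply right_diff_distrib sum_subtractf sum_distrib_left mult_ac cong: sum.cong)
  also have "(\<Sum>a\<in>A. \<chi> (snd a) * (\<Sum>b\<in>A. if snd b = fst a then \<psi> b else 0))
      = (\<Sum>b\<in>A. \<psi> b * (\<mu> * \<chi> (snd b)))"
    unfolding sum_composable_arcs by (rule sum.cong) (simp_all add: sum_arcs_from eigen snd_arc)
  finally show ?thesis
    unfolding head_pairing_swap head_pairing_def by (simp add: sum_distrib_left mult_ac)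
qed

lemma tail_pairing_walk: "tail_pairing (mvec A (walkU V A) \<psi>) = head_pairing \<psi>"
proof -
  have "tail_pairing (mvec A (walkU V A) \<psi>)
      = 2 / k * (\<Sum>a\<in>A. \<chi> (fst a) * (\<Sum>b\<in>A. if snd b = fst a then \<psi> b else 0))
        - (\<Sum>a\<in>A. \<chi> (fst a) * \<psi> (prod.swap a))"
    unfolding tail_pairing_def
    by (simp add: walkU_apply right_diff_distrib sum_subtractf sum_distrib_left mult_ac cong: sum.cong)
  also have "(\<Sum>a\<in>A. \<chi> (fst a) * (\<Sum>b\<in>A. if snd b = fst a then \<psi> b else 0))
      = (\<Sum>b\<in>A. \<psi> b * (of_nat k * \<chi> (snd b)))"
  proof -
    have "(\<Sum>a\<in>A. if fst a = snd b then \<chi> (fst a) else 0) = of_nat k * \<chi> (snd b)" if "b \<in> A" for b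
      using sum_arcs_from_const[OF snd_arc[OF that]] by (simp cong: if_cong)
    then show ?thesis
      unfolding sum_composable_arcs by simp
  qed
  finally show ?thesis
    unfolding tail_pairing_swap head_pairing_def using degree_pos by (simp add: sum_distrib_left mult_ac)
qed

lemma of_nat_degree_sqrt: "(of_nat k :: complex) = of_real (sqrt k) * of_real (sqrt k)"
  by (simp flip: of_real_mult)

lemma head_pairing_vertex_state:
  assumes "x \<in> V"
  shows "head_pairing (vertex_state x) = sqrt k * \<chi> x"
proof -
  have "head_pairing (vertex_state x) = (\<Sum>a\<in>A. if snd a = x then \<chi> x / sqrt k else 0)"
    unfolding head_pairing_def by (rule sum.cong) (simp_all add: vertex_state_eq assms)
  also have "\<dots> = (\<Sum>a\<in>A. if fst a = x then \<chi> x / sqrt k else 0)"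
    using sum_arcs_swap[of "\<lambda>a. if snd a = x then \<chi> x / sqrt k else 0"] by simp
  also have "\<dots> = sqrt k * \<chi> x"
    using degree_pos by (simp add: sum_arcs_from_const assms of_nat_degree_sqrt)
  finally show ?thesis .
qed

lemma tail_pairing_vertex_state:
  assumes "x \<in> V"
  shows "tail_pairing (vertex_state x) = \<mu> / sqrt k * \<chi> x"
proof -
  have "tail_pairing (vertex_state x) = (\<Sum>a\<in>A. if snd a = x then \<chi> (fst a) / sqrt k else 0)"
    unfolding tail_pairing_def by (rule sum.cong) (simp_all add: vertex_state_eq assms)
  also have "\<dots> = (\<Sum>a\<in>A. if fst a = x then \<chi> (snd a) / sqrt k else 0)"
    using sum_arcs_swap[of "\<lambda>a. if snd a = x then \<chi> (fst a) / sqrt k else 0"] by (simp cong: if_cong)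
  also have "\<dots> = (\<Sum>y\<in>{y \<in> V. (x, y) \<in> A}. \<chi> y) / sqrt k"
    using sum_arcs_from[OF assms, of "\<lambda>y. \<chi> y / sqrt k"] by (simp add: sum_divide_distrib)
  finally show ?thesis
    by (simp add: eigen assms)
qed

lemma head_pairing_cong: "(\<And>a. a \<in> A \<Longrightarrow> \<psi> a = \<phi> a) \<Longrightarrow> head_pairing \<psi> = head_pairing \<phi>"
  and tail_pairing_cong: "(\<And>a. a \<in> A \<Longrightarrow> \<psi> a = \<phi> a) \<Longrightarrow> tail_pairing \<psi> = tail_pairing \<phi>"
  unfolding head_pairing_def tail_pairing_def by (auto intro: sum.cong)

lemma head_pairing_scale: "head_pairing (\<lambda>a. c * \<psi> a) = c * head_pairing \<psi>"
  unfolding head_pairing_def by (simp add: sum_distrib_left mult_ac)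

lemma pairings_idmat:
  "head_pairing (mvec A idmat \<psi>) = head_pairing \<psi>" "tail_pairing (mvec A idmat \<psi>) = tail_pairing \<psi>"
  using finite_A by (auto intro: head_pairing_cong tail_pairing_cong simp: mvec_idmat)

lemma mvec_mpow_Suc: "mvec A (mpow A M (Suc t)) \<psi> = mvec A M (mvec A (mpow A M t) \<psi>)"
  by (simp add: mvec_mmult)

lemma pairings_walk_power:
  assumes "x \<in> V"
  shows "head_pairing (mvec A (mpow A (walkU V A) (Suc t)) (vertex_state x))
           = sqrt k / 2 * \<chi> x * poly (vieta_lucas (Suc t)) (2 * \<mu> / k)
         \<and> tail_pairing (mvec A (mpow A (walkU V A) (Suc t)) (vertex_state x))
           = sqrt k / 2 * \<chi> x * poly (vieta_lucas t) (2 * \<mu> / k)"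
proof (induct t)
  case 0
  show ?case
    using degree_pos unfolding mvec_mpow_Suc
    by (simp add: head_pairing_walk tail_pairing_walk pairings_idmat assms
        head_pairing_vertex_state tail_pairing_vertex_state of_nat_degree_sqrt field_simps)
next
  case (Suc t)
  then show ?case
    by (simp only: mvec_mpow_Suc[of _ "Suc t"] head_pairing_walk tail_pairing_walk)
      (simp add: algebra_simps)
qed

lemma head_pairing_walk_power:
  assumes "x \<in> V"
  shows "head_pairing (mvec A (mpow A (walkU V A) t) (vertex_state x))
    = sqrt k / 2 * \<chi> x * poly (vieta_lucas t) (2 * \<mu> / k)"
proof (cases t)
  case 0
  then show ?thesis
    by (simp add: pairings_idmat head_pairing_vertex_state assms)
next
  case (Suc t)
  then show ?thesis
    using pairings_walk_power[OF assms] by blast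
qed

theorem vertex_PST_vieta_lucas:
  assumes "x \<in> V" "y \<in> V"
    and transfer: "\<forall>a\<in>A. mvec A (mpow A (walkU V A) \<tau>) (vertex_state x) a = \<gamma> * vertex_state y a"
  shows "\<chi> x * poly (vieta_lucas \<tau>) (2 * \<mu> / k) = 2 * \<gamma> * \<chi> y"
proof -
  have "head_pairing (mvec A (mpow A (walkU V A) \<tau>) (vertex_state x))
      = head_pairing (\<lambda>a. \<gamma> * vertex_state y a)"
    using transfer by (intro head_pairing_cong) simp
  then have "sqrt k / 2 * \<chi> x * poly (vieta_lucas \<tau>) (2 * \<mu> / k) = \<gamma> * (sqrt k * \<chi> y)"
    unfolding head_pairing_walk_power[OF assms(1)] head_pairing_scale head_pairing_vertex_state[OF assms(2)] .
  then show ?thesis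
    using degree_pos by (simp add: field_simps)
qed

end

section \<open>Circulant graphs\<close>

definition circ_char :: "int \<Rightarrow> int \<Rightarrow> complex" where
  "circ_char n v = cis (2 * pi * of_int v / of_int n)"

lemma circ_char_0 [simp]: "circ_char n 0 = 1"
  unfolding circ_char_def by simp

lemma circ_char_add: "circ_char n (u + v) = circ_char n u * circ_char n v"
  unfolding circ_char_def by (simp add: cis_mult add_divide_distrib distrib_left)

lemma circ_char_power: "circ_char n v ^ m = circ_char n (v * int m)"
  unfolding circ_char_def DeMoivre by (simp add: algebra_simps)

lemma circ_char_uminus: "circ_char n (- v) = cnj (circ_char n v)"
  unfolding circ_char_def by (simp add: cis_cnj)

lemma norm_circ_char [simp]: "norm (circ_char n v) = 1"
  unfolding circ_char_def by simp

lemma circ_char_eq_1_iff: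
  assumes "n > 0"
  shows "circ_char n v = 1 \<longleftrightarrow> n dvd v"
proof
  assume "circ_char n v = 1"
  then have "cos (2 * pi * of_int v / of_int n) = 1"
    unfolding circ_char_def by (metis cis.sel(1) one_complex.sel(1))
  then obtain j :: int where "2 * pi * of_int v / of_int n = of_int j * 2 * pi"
    by (auto simp: cos_one_2pi_int)
  then have "of_int v = (of_int (j * n) :: real)"
    using assms by (simp add: field_simps)
  then show "n dvd v"
    by (simp only: of_int_eq_iff) simp
next
  assume "n dvd v"
  then obtain j where "v = n * j" ..
  then have "2 * pi * of_int v / of_int n = 2 * pi * of_int j"
    using assms by simp
  then show "circ_char n v = 1"
    unfolding circ_char_def by (simp add: cis_multiple_2pi)
qed

lemma circ_char_mod: "n > 0 \<Longrightarrow> circ_char n (v mod n) = circ_char n v"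
  using circ_char_add[of n "v mod n" "n * (v div n)"] circ_char_eq_1_iff[of n "n * (v div n)"] by simp

lemma circ_char_root_of_unity: "n > 0 \<Longrightarrow> circ_char n v ^ nat n = 1"
  by (simp add: circ_char_power circ_char_eq_1_iff)

locale circulant =
  fixes n :: int and S :: "int set"
  assumes n_pos: "n > 0" and S_residues: "S \<subseteq> {0..<n}"
    and S_sym: "s \<in> S \<Longrightarrow> (- s) mod n \<in> S"
begin

abbreviation V where "V \<equiv> circ_verts n"
abbreviation A where "A \<equiv> circ_arcs n S"

lemma neighbours_eq:
  assumes "x \<in> V"
  shows "{y \<in> V. (x, y) \<in> A} = (\<lambda>s. (x + s) mod n) ` S"
proof (intro equalityI subsetI)
  fix y assume "y \<in> {y \<in> V. (x, y) \<in> A}"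
  then have "y = (x + (y - x) mod n) mod n" "(y - x) mod n \<in> S"
    unfolding circ_arcs_def circ_verts_def by (auto simp: mod_add_right_eq)
  then show "y \<in> (\<lambda>s. (x + s) mod n) ` S"
    by blast
next
  fix y assume "y \<in> (\<lambda>s. (x + s) mod n) ` S"
  then obtain s where "s \<in> S" "y = (x + s) mod n"
    by blast
  moreover from this have "(y - x) mod n = s"
    using S_residues by (auto simp: mod_diff_left_eq)
  ultimately show "y \<in> {y \<in> V. (x, y) \<in> A}"
    using assms n_pos unfolding circ_arcs_def circ_verts_def by auto
qed

lemma inj_on_neighbours: "inj_on (\<lambda>s. (x + s) mod n) S"
proof
  fix s t assume "s \<in> S" "t \<in> S" "(x + s) mod n = (x + t) mod n"
  then have "s mod n = t mod n"
    by (metis add_diff_cancel_left' mod_diff_left_eq)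
  with \<open>s \<in> S\<close> \<open>t \<in> S\<close> show "s = t"
    using S_residues by (metis atLeastLessThan_iff mod_pos_pos_trivial subsetD)
qed

lemma gdeg_eq: "x \<in> V \<Longrightarrow> gdeg V A x = card S"
  unfolding gdeg_def by (simp add: neighbours_eq card_image inj_on_neighbours)

lemma circ_regular_graph: "S \<noteq> {} \<Longrightarrow> regular_graph V A (card S)"
proof unfold_locales
  show "finite V" "A \<subseteq> V \<times> V"
    unfolding circ_verts_def circ_arcs_def by auto
  show "(y, x) \<in> A" if "(x, y) \<in> A" for x y
    using that S_sym[of "(y - x) mod n"] unfolding circ_arcs_def by (simp add: mod_minus_eq)
  show "graph_regular V A (card S)"
    unfolding graph_regular_def by (simp add: gdeg_eq)
  show "S \<noteq> {} \<Longrightarrow> card S > 0"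
    using S_residues finite_subset by (simp add: card_gt_0_iff) blast
qed

lemma circ_char_eigen:
  assumes "x \<in> V"
  shows "(\<Sum>y\<in>{y \<in> V. (x, y) \<in> A}. circ_char n y) = (\<Sum>s\<in>S. circ_char n s) * circ_char n x"
proof -
  have "(\<Sum>y\<in>{y \<in> V. (x, y) \<in> A}. circ_char n y) = (\<Sum>s\<in>S. circ_char n ((x + s) mod n))"
    unfolding neighbours_eq[OF assms] by (simp add: sum.reindex inj_on_neighbours)
  also have "\<dots> = (\<Sum>s\<in>S. circ_char n s * circ_char n x)"
    using n_pos by (simp add: circ_char_mod circ_char_add mult.commute)
  also have "\<dots> = (\<Sum>s\<in>S. circ_char n s) * circ_char n x"
    by (simp add: sum_distrib_right)
  finally show ?thesis .
qed

lemma circ_graph_eigenvector: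
  "S \<noteq> {} \<Longrightarrow> graph_eigenvector V A (card S) (circ_char n) (\<Sum>s\<in>S. circ_char n s)"
  unfolding graph_eigenvector_def graph_eigenvector_axioms_def
  using circ_regular_graph circ_char_eigen by blast

lemma sum_circ_char_real: "(\<Sum>s\<in>S. circ_char n s) \<in> \<real>"
proof -
  have "cnj (\<Sum>s\<in>S. circ_char n s) = (\<Sum>s\<in>S. circ_char n ((- s) mod n))"
    using n_pos by (simp add: circ_char_mod circ_char_uminus)
  also have "\<dots> = (\<Sum>s\<in>S. circ_char n s)"
    using S_residues S_sym
    by (intro sum.reindex_bij_witness[of _ "\<lambda>s. (- s) mod n" "\<lambda>s. (- s) mod n"])
      (auto simp: mod_minus_eq subset_iff)
  finally show ?thesis
    by (simp add: Reals_cnj_iff)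
qed

theorem vertex_PST_imp_algebraic_int:
  assumes "S \<noteq> {}" "has_vertex_PST V A"
  shows "algebraic_int (2 * (\<Sum>s\<in>S. circ_char n s) / card S)"
proof -
  interpret graph_eigenvector V A "card S" "circ_char n" "\<Sum>s\<in>S. circ_char n s"
    using circ_graph_eigenvector[OF assms(1)] .
  let ?z = "2 * (\<Sum>s\<in>S. circ_char n s) / card S"
  obtain x y \<tau> \<gamma> where xy: "x \<in> V" "y \<in> V" "\<tau> \<ge> 1" "cmod \<gamma> = 1"
    and transfer: "\<forall>a\<in>A. mvec A (mpow A (walkU V A) \<tau>) (vertex_state x) a = \<gamma> * vertex_state y a"
    using assms(2) unfolding has_vertex_PST_def by blast
  have "circ_char n x * poly (vieta_lucas \<tau>) ?z = 2 * \<gamma> * circ_char n y"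
    using vertex_PST_vieta_lucas[OF xy(1,2) transfer] .
  then have norm: "norm (poly (vieta_lucas \<tau>) ?z) = 2"
    using arg_cong[where f = norm] xy(4) by (metis norm_circ_char norm_mult mult_1 mult_1_right norm_numeral)
  obtain r where r: "?z = of_real r"
    using sum_circ_char_real by (metis Reals_cases Reals_divide Reals_mult Reals_numeral Reals_of_nat)
  have "\<bar>poly (vieta_lucas \<tau>) r\<bar> = 2"
    using norm unfolding r poly_vieta_lucas_of_real by simp
  then have "poly (vieta_lucas \<tau>) r = 2 \<or> poly (vieta_lucas \<tau>) r = -2"
    by arith
  then have "poly (vieta_lucas \<tau>) ?z \<in> \<int>"
    unfolding r poly_vieta_lucas_of_real by auto
  then show ?thesis
    using xy(3) by (intro algebraic_int_if_poly_vieta_lucas_Ints[of \<tau>]) simp_all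
qed

end

lemma circ_char_square_eq_1_iff:
  assumes "l > 0"
  shows "circ_char (2 * l) v ^ 2 = 1 \<longleftrightarrow> l dvd v"
  using assms by (simp add: circ_char_power circ_char_eq_1_iff mult.commute)

lemma eq_if_dvd_less_double:
  fixes l v :: int
  assumes "l dvd v" "0 < v" "v < 2 * l"
  shows "v = l"
proof -
  obtain q where q: "v = l * q"
    using assms(1) ..
  with assms(2,3) have "0 < q" "q < 2"
    by (auto simp: zero_less_mult_iff mult_less_cancel_left)
  with q show ?thesis
    by simp
qed

lemma not_algebraic_int_half_circ_char_sum:
  fixes l a b :: int
  assumes "a \<in> {1..l-1}" "b \<in> {1..l-1}" "a \<noteq> b" "a + b \<noteq> l"
  shows "\<not> algebraic_int ((circ_char (2 * l) a + circ_char (2 * l) (- a)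
                              + circ_char (2 * l) b + circ_char (2 * l) (- b)) / 2)"
proof
  let ?\<zeta> = "circ_char (2 * l)"
  have l: "l > 0" "nat (2 * l) > 0"
    using assms(1) by simp_all
  assume "algebraic_int ((?\<zeta> a + ?\<zeta> (- a) + ?\<zeta> b + ?\<zeta> (- b)) / 2)"
  moreover have "algebraic_int (?\<zeta> b)"
    using l by (intro algebraic_int_root_of_unity[of _ "nat (2 * l)"] circ_char_root_of_unity) simp_all
  ultimately have "algebraic_int ((?\<zeta> a + ?\<zeta> (- a) + ?\<zeta> b + ?\<zeta> (- b)) / 2 * ?\<zeta> b)"
    by (rule algebraic_int_times)
  also have "(?\<zeta> a + ?\<zeta> (- a) + ?\<zeta> b + ?\<zeta> (- b)) / 2 * ?\<zeta> b
      = (1 + ?\<zeta> (b - a)) * (1 + ?\<zeta> (a + b)) / 2"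
    by (simp add: field_simps flip: circ_char_add)
  finally have "algebraic_int ((1 + ?\<zeta> (b - a)) * (1 + ?\<zeta> (a + b)) / 2)" .
  moreover have "\<not> l dvd (b - a)"
    using assms(1-3) zdvd_not_zless[of "\<bar>b - a\<bar>" l] by (auto simp: abs_less_iff)
  moreover have "\<not> l dvd (a + b)"
    using assms(1,2,4) eq_if_dvd_less_double[of l "a + b"] by auto
  moreover have "\<not> (?\<zeta> (b - a) ^ 2 = -1 \<and> ?\<zeta> (a + b) ^ 2 = -1)"
  proof
    assume squares: "?\<zeta> (b - a) ^ 2 = -1 \<and> ?\<zeta> (a + b) ^ 2 = -1"
    have "?\<zeta> (2 * b) = ?\<zeta> (b - a) * ?\<zeta> (a + b)" "?\<zeta> (a + b) = ?\<zeta> (2 * a) * ?\<zeta> (b - a)"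
      by (simp_all flip: circ_char_add)
    then have "?\<zeta> (2 * b) ^ 2 = ?\<zeta> (b - a) ^ 2 * ?\<zeta> (a + b) ^ 2"
      "?\<zeta> (a + b) ^ 2 = ?\<zeta> (2 * a) ^ 2 * ?\<zeta> (b - a) ^ 2"
      by (simp_all only: power_mult_distrib)
    then have "?\<zeta> (2 * b) ^ 2 = 1" "?\<zeta> (2 * a) ^ 2 = 1"
      using squares by simp_all
    then have "2 * b = l" "2 * a = l"
      using l(1) assms(1,2) eq_if_dvd_less_double by (auto simp: circ_char_square_eq_1_iff)
    with assms(3) show False
      by simp
  qed
  ultimately show False
    using not_algebraic_int_half_prod_one_plus_roots_of_unity[OF circ_char_root_of_unity l(2)
        circ_char_root_of_unity l(2)] l(1) by (simp add: circ_char_square_eq_1_iff)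
qed

theorem theorem9p19:
  fixes l a b :: int
  assumes "l \<ge> 2" and "even l"
    and "a \<in> {1..l-1}" and "b \<in> {1..l-1}"
    and "graph_connected (circ_verts (2*l))
           (circ_arcs (2*l) {a mod (2*l), (-a) mod (2*l), b mod (2*l), (-b) mod (2*l)})"
    and "graph_regular (circ_verts (2*l))
           (circ_arcs (2*l) {a mod (2*l), (-a) mod (2*l), b mod (2*l), (-b) mod (2*l)}) 4"
    and "a + b \<noteq> l"
  shows "\<not> has_vertex_PST (circ_verts (2*l))
           (circ_arcs (2*l) {a mod (2*l), (-a) mod (2*l), b mod (2*l), (-b) mod (2*l)})"
proof
  define n where "n = 2 * l"
  define S where "S = {a mod n, (- a) mod n, b mod n, (- b) mod n}"
  assume pst: "has_vertex_PST (circ_verts (2*l))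
    (circ_arcs (2*l) {a mod (2*l), (-a) mod (2*l), b mod (2*l), (-b) mod (2*l)})"
  interpret circulant n S
    using assms(1) by unfold_locales (auto simp: n_def S_def mod_minus_eq)
  have "card S = 4"
    using assms(6) gdeg_eq[of 0] n_pos unfolding graph_regular_def circ_verts_def n_def S_def by simp
  then have "a \<noteq> b"
    and sum_S: "(\<Sum>s\<in>S. circ_char n s) = circ_char n a + circ_char n (- a) + circ_char n b + circ_char n (- b)"
    using n_pos unfolding S_def by (auto simp: card_insert_if circ_char_mod split: if_splits)
  have "algebraic_int (2 * (\<Sum>s\<in>S. circ_char n s) / card S)"
    using vertex_PST_imp_algebraic_int \<open>card S = 4\<close> pst unfolding n_def S_def by fastforce
  moreover have "2 * (\<Sum>s\<in>S. circ_char n s) / card S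
      = (circ_char n a + circ_char n (- a) + circ_char n b + circ_char n (- b)) / 2"
    unfolding sum_S \<open>card S = 4\<close> by simp
  ultimately have "algebraic_int ((circ_char n a + circ_char n (- a) + circ_char n b + circ_char n (- b)) / 2)"
    by simp
  then show False
    using not_algebraic_int_half_circ_char_sum[OF assms(3,4) \<open>a \<noteq> b\<close> assms(7)]
    unfolding n_def by simp
qed

end
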